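(* Let $(\Omega,\mathcal{F},P)$ be a probability space, $\mathcal{X}$ a measurable space, $X:\Omega\to\mathcal{X}$ a measurable map (an act), $u:\mathcal{X}\to\mathbb{R}$ a measurable function, and $\beta\in(-1,\infty)$. For $v\in\mathbb{R}$ define $k_v:\mathcal{X}\to\mathbb{R}$ by $k_v(x)=\dfrac{u(x)+\beta v}{1+\beta}$ if $u(x)\ge v$ and $k_v(x)=u(x)$ if $u(x)<v$. Suppose $\mathbb{E}[u(X)]$ exists and is finite. Then for $v\in\mathbb{R}$ the following are equivalent: (1) $v=\mathbb{E}[k_v(X)]$; (2) $\mathbb{E}[(u(X)-v)^+]=(1+\beta)\,\mathbb{E}[(v-u(X))^+]$. In particular, such a $v$ exists and is unique.
   Context: $s^+=\max\{s,0\}$. The unique solution is denoted $\mathbb{E}_\beta[u(X)]$ (the expectile, or "expectiled utility"). *)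

theory Defs
  imports "HOL-Probability.Probability"
begin

definition kfun :: "('x \<Rightarrow> real) \<Rightarrow> real \<Rightarrow> real \<Rightarrow> 'x \<Rightarrow> real" where
  "kfun u \<beta> v x = (if u x \<ge> v then (u x + \<beta> * v) / (1 + \<beta>) else u x)"

definition pos_part :: "real \<Rightarrow> real" where
  "pos_part s = max s 0"

end

theory Submission
  imports Defs
begin

text \<open>Write \<open>Y = u \<circ> X\<close>, \<open>A v = E[(Y - v)\<^sup>+]\<close> and \<open>B v = E[(v - Y)\<^sup>+]\<close>.
  Pointwise \<open>k\<^sub>v = Y - \<beta>/(1+\<beta>) (Y - v)\<^sup>+\<close>, and \<open>A v - B v = E[Y] - v\<close>; together these turn
  the fixed point equation \<open>v = E[k\<^sub>v(X)]\<close> into \<open>A v = (1+\<beta>) B v\<close>.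
  On a step from \<open>v\<close> to \<open>w > v\<close>, \<open>A\<close> drops and \<open>B\<close> rises by nonnegative amounts adding up
  to \<open>w - v\<close>, so the gap \<open>A - (1+\<beta>) B\<close> decreases with slope between \<open>min 1 (1+\<beta>)\<close> and
  \<open>max 1 (1+\<beta>)\<close>. Such a function is continuous and has exactly one zero.\<close>

lemma strongly_decreasing_has_unique_zero:
  fixes f :: "real \<Rightarrow> real"
  assumes "0 < a"
    and slope: "\<And>v w. v \<le> w \<Longrightarrow> a * (w - v) \<le> f v - f w \<and> f v - f w \<le> b * (w - v)"
  shows "\<exists>!v. f v = 0"
proof -
  have "b-lipschitz_on UNIV f"
  proof (rule lipschitz_onI)
    show "0 \<le> b"
      using slope[of 0 1] \<open>0 < a\<close> by simp
    show "dist (f v) (f w) \<le> b * dist v w" for v w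
      using slope[of v w] slope[of w v] \<open>0 < a\<close>
      by (cases "v \<le> w") (auto simp: dist_real_def dest: order_trans[OF mult_nonneg_nonneg, rotated 2])
  qed
  then have cont: "continuous_on {v..w} f" for v w
    using lipschitz_on_continuous_on continuous_on_subset by blast
  have "\<exists>v. f v = 0"
  proof (cases "0 \<le> f 0")
    case True
    have "f (f 0 / a) \<le> 0"
      using slope[of 0 "f 0 / a"] True \<open>0 < a\<close> by simp
    then show ?thesis
      using IVT2'[where f = f and a = 0 and b = "f 0 / a" and y = 0] True \<open>0 < a\<close> cont by auto
  next
    case False
    have "0 \<le> f (f 0 / a)"
      using slope[of "f 0 / a" 0] False \<open>0 < a\<close> by (simp add: divide_nonpos_pos)
    then show ?thesis
      using IVT2'[where f = f and a = "f 0 / a" and b = 0 and y = 0] False \<open>0 < a\<close> cont by (auto simp: divide_nonpos_pos)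
  qed
  moreover have "v = w" if "f v = 0" "f w = 0" for v w
    using slope[of v w] slope[of w v] that \<open>0 < a\<close> by (cases "v \<le> w") (auto simp: mult_le_0_iff)
  ultimately show ?thesis
    by blast
qed

lemma pos_part_diff_flip: "pos_part s - pos_part (- s) = s"
  by (simp add: pos_part_def)

lemma pos_part_mono: "s \<le> t \<Longrightarrow> pos_part s \<le> pos_part t"
  by (simp add: pos_part_def)

lemma integrable_pos_part: "integrable M f \<Longrightarrow> integrable M (\<lambda>x. pos_part (f x))"
  unfolding pos_part_def by (intro integrable_max) auto

lemma kfun_eq_sub_pos_part:
  assumes "\<beta> > -1"
  shows "kfun u \<beta> v x = u x - \<beta> / (1 + \<beta>) * pos_part (u x - v)"
proof (cases "u x \<ge> v")
  case True
  have "1 + \<beta> \<noteq> 0"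
    using assms by simp
  with True show ?thesis
    unfolding kfun_def pos_part_def by (simp add: field_simps)
next
  case False
  then show ?thesis
    unfolding kfun_def pos_part_def by simp
qed

context prob_space
begin

lemma expectation_pos_part_diff:
  assumes "integrable M Y"
  shows "expectation (\<lambda>\<omega>. pos_part (Y \<omega> - v)) - expectation (\<lambda>\<omega>. pos_part (v - Y \<omega>))
    = expectation Y - v"
proof -
  have "expectation (\<lambda>\<omega>. pos_part (Y \<omega> - v)) - expectation (\<lambda>\<omega>. pos_part (v - Y \<omega>))
      = expectation (\<lambda>\<omega>. pos_part (Y \<omega> - v) - pos_part (v - Y \<omega>))"
    using assms by (simp add: integrable_pos_part)
  also have "\<dots> = expectation (\<lambda>\<omega>. Y \<omega> - v)"
    using pos_part_diff_flip[of "Y _ - v"] by simp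
  also have "\<dots> = expectation Y - v"
    using assms by (simp add: prob_space)
  finally show ?thesis .
qed

lemma expectation_kfun:
  assumes "\<beta> > -1" and "integrable M Y"
  shows "expectation (kfun Y \<beta> v) = expectation Y - \<beta> / (1 + \<beta>) * expectation (\<lambda>\<omega>. pos_part (Y \<omega> - v))"
proof -
  have "kfun Y \<beta> v = (\<lambda>\<omega>. Y \<omega> - \<beta> / (1 + \<beta>) * pos_part (Y \<omega> - v))"
    by (rule ext) (rule kfun_eq_sub_pos_part[OF assms(1)])
  then show ?thesis
    using assms(2) by (simp add: integrable_pos_part)
qed

lemma kfun_fixed_point_iff:
  assumes "\<beta> > -1" and "integrable M Y"
  shows "v = expectation (kfun Y \<beta> v) \<longleftrightarrow>
    expectation (\<lambda>\<omega>. pos_part (Y \<omega> - v)) = (1 + \<beta>) * expectation (\<lambda>\<omega>. pos_part (v - Y \<omega>))"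
proof -
  define A where "A = expectation (\<lambda>\<omega>. pos_part (Y \<omega> - v))"
  define B where "B = expectation (\<lambda>\<omega>. pos_part (v - Y \<omega>))"
  have AB: "A - B = expectation Y - v"
    unfolding A_def B_def using expectation_pos_part_diff[OF assms(2)] .
  have "v = expectation (kfun Y \<beta> v) \<longleftrightarrow> (1 + \<beta>) * (expectation Y - v) = \<beta> * A"
    using assms by (auto simp: expectation_kfun A_def field_simps)
  also have "\<dots> \<longleftrightarrow> A = (1 + \<beta>) * B"
    unfolding AB[symmetric] by (simp add: algebra_simps)
  finally show ?thesis
    unfolding A_def B_def .
qed

lemma expectile_gap_slope:
  assumes "integrable M Y" and "0 \<le> c" and "v \<le> w"
  defines "g \<equiv> \<lambda>v. expectation (\<lambda>\<omega>. pos_part (Y \<omega> - v)) - c * expectation (\<lambda>\<omega>. pos_part (v - Y \<omega>))"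
  shows "min 1 c * (w - v) \<le> g v - g w \<and> g v - g w \<le> max 1 c * (w - v)"
proof -
  define a where "a = expectation (\<lambda>\<omega>. pos_part (Y \<omega> - v)) - expectation (\<lambda>\<omega>. pos_part (Y \<omega> - w))"
  define b where "b = expectation (\<lambda>\<omega>. pos_part (w - Y \<omega>)) - expectation (\<lambda>\<omega>. pos_part (v - Y \<omega>))"
  have "0 \<le> a"
    unfolding a_def using assms(1,3)
    by (simp add: integrable_pos_part integral_mono pos_part_mono)
  moreover have "0 \<le> b"
    unfolding b_def using assms(1,3)
    by (simp add: integrable_pos_part integral_mono pos_part_mono)
  moreover have step: "w - v = a + b"
    unfolding a_def b_def
    using expectation_pos_part_diff[OF assms(1), of v] expectation_pos_part_diff[OF assms(1), of w]
    by simp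
  moreover have gap: "g v - g w = a + c * b"
    unfolding g_def a_def b_def by (simp add: algebra_simps)
  moreover have "min 1 c * a \<le> a" "min 1 c * b \<le> c * b" "a \<le> max 1 c * a" "c * b \<le> max 1 c * b"
    using \<open>0 \<le> a\<close> \<open>0 \<le> b\<close> mult_right_mono[of "min 1 c" 1 a] mult_right_mono[of 1 "max 1 c" a]
    by (auto intro: mult_right_mono)
  ultimately show ?thesis
    unfolding step gap distrib_left by (simp add: mult.commute)
qed

lemma ex1_expectile:
  assumes "integrable M Y" and "0 < c"
  shows "\<exists>!v. expectation (\<lambda>\<omega>. pos_part (Y \<omega> - v)) = c * expectation (\<lambda>\<omega>. pos_part (v - Y \<omega>))"
proof -
  have "\<exists>!v. expectation (\<lambda>\<omega>. pos_part (Y \<omega> - v)) - c * expectation (\<lambda>\<omega>. pos_part (v - Y \<omega>)) = 0"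
    using assms expectile_gap_slope[OF assms(1) less_imp_le[OF assms(2)]]
    by (intro strongly_decreasing_has_unique_zero[where a = "min 1 c" and b = "max 1 c"]) simp_all
  then show ?thesis
    by simp
qed

end

theorem proposition1:
  fixes M :: "'w measure" and N :: "'x measure"
    and X :: "'w \<Rightarrow> 'x" and u :: "'x \<Rightarrow> real" and \<beta> :: real
  assumes "prob_space M"
    and "X \<in> measurable M N"
    and "u \<in> borel_measurable N"
    and "\<beta> > -1"
    and "integrable M (\<lambda>\<omega>. u (X \<omega>))"
  shows "(\<forall>v::real. (v = prob_space.expectation M (\<lambda>\<omega>. kfun u \<beta> v (X \<omega>))) \<longleftrightarrow>
            (prob_space.expectation M (\<lambda>\<omega>. pos_part (u (X \<omega>) - v))
               = (1 + \<beta>) * prob_space.expectation M (\<lambda>\<omega>. pos_part (v - u (X \<omega>)))))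
         \<and> (\<exists>!v::real. v = prob_space.expectation M (\<lambda>\<omega>. kfun u \<beta> v (X \<omega>)))"
proof -
  interpret prob_space M by fact
  have kfun_comp: "(\<lambda>\<omega>. kfun u \<beta> v (X \<omega>)) = kfun (\<lambda>\<omega>. u (X \<omega>)) \<beta> v" for v
    by (rule ext) (simp add: kfun_def)
  have "v = expectation (\<lambda>\<omega>. kfun u \<beta> v (X \<omega>)) \<longleftrightarrow>
      expectation (\<lambda>\<omega>. pos_part (u (X \<omega>) - v)) = (1 + \<beta>) * expectation (\<lambda>\<omega>. pos_part (v - u (X \<omega>)))"
    for v
    unfolding kfun_comp using kfun_fixed_point_iff[OF assms(4,5)] .
  moreover have "\<exists>!v. expectation (\<lambda>\<omega>. pos_part (u (X \<omega>) - v))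
      = (1 + \<beta>) * expectation (\<lambda>\<omega>. pos_part (v - u (X \<omega>)))"
    using ex1_expectile[OF assms(5)] assms(4) by simp
  ultimately show ?thesis
    by simp
qed

end
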